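(* Let $\mathbb{F}$ be a commutative field, $n\ge 2$ an integer, and $S=\mathbf{PGL}_n(\mathbb{F})$ acting naturally on the projective space $\mathbf{PG}(n-1,\mathbb{F})$. Let $x$ be a point and $\Pi$ a hyperplane of $\mathbf{PG}(n-1,\mathbb{F})$ (any choice), and put $L=S_x$ (the stabilizer of $x$) and $L'=S_\Pi$ (the stabilizer of $\Pi$). Then $(S\wr \mathrm{S}_2,\ L\wr \mathrm{S}_2,\ L'\wr \mathrm{S}_2)$ is an EC-triple.
   Context: For a group $S$ and a subgroup $P$ of the symmetric group on a finite nonempty set $\Omega$, the wreath product $S\wr P$ consists of pairs $(g,p)$ with $g=(g_\omega)_{\omega\in\Omega}\in S^\Omega$ and $p\in P$, with multiplication $(g,p)(g',p')=(g\,p(g'),pp')$, where $p(g')=(g'_{p^{-1}(\omega)})_{\omega\in\Omega}$. For $L\le S$, $L\wr P$ denotes the subgroup $\{(g,p): g\in L^\Omega, p\in P\}$. Here $\mathrm{S}_2$ is the symmetric group on $\{1,2\}$. A triple $(G,H,H')$ with $H,H'\le G$ is an EC-triple if every element of $H$ is conjugate in $G$ to some element of $H'$ and every element of $H'$ is conjugate in $G$ to some element of $H$. *)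

theory Defs
  imports "Jordan_Normal_Form.Determinant" "HOL-Algebra.Coset"
begin

text \<open>Elements of S wr P: pairs (g,p) with g a function Omega -> carrier S (extensional,
  i.e. undefined outside Omega) and p a permutation in P.  Multiplication
  (g,p)(g',p') = (g * p(g'), p p') where p(g')_w = g'_(p^-1 w).\<close>

definition wreath :: "('g, 'm) monoid_scheme \<Rightarrow> 'i set \<Rightarrow> ('i \<Rightarrow> 'i) set
    \<Rightarrow> (('i \<Rightarrow> 'g) \<times> ('i \<Rightarrow> 'i)) monoid" where
  "wreath S \<Omega> P =
    \<lparr> carrier = {(g, p). g \<in> \<Omega> \<rightarrow>\<^sub>E carrier S \<and> p \<in> P},
      mult = (\<lambda>(g, p) (g', p'). ((\<lambda>\<omega>\<in>\<Omega>. g \<omega> \<otimes>\<^bsub>S\<^esub> g' (inv_into UNIV p \<omega>)), p \<circ> p')),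
      one = ((\<lambda>\<omega>\<in>\<Omega>. \<one>\<^bsub>S\<^esub>), id) \<rparr>"

definition wreath_sub :: "'g set \<Rightarrow> 'i set \<Rightarrow> ('i \<Rightarrow> 'i) set
    \<Rightarrow> (('i \<Rightarrow> 'g) \<times> ('i \<Rightarrow> 'i)) set" where
  "wreath_sub L \<Omega> P = {(g, p). g \<in> \<Omega> \<rightarrow>\<^sub>E L \<and> p \<in> P}"

definition Sym2 :: "(nat \<Rightarrow> nat) set" where
  "Sym2 = {p. p permutes {1, 2}}"

definition conjugate_in :: "('a, 'b) monoid_scheme \<Rightarrow> 'a \<Rightarrow> 'a \<Rightarrow> bool" where
  "conjugate_in G h h' \<longleftrightarrow> (\<exists>x\<in>carrier G. x \<otimes>\<^bsub>G\<^esub> h \<otimes>\<^bsub>G\<^esub> inv\<^bsub>G\<^esub> x = h')"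

definition EC_triple :: "('a, 'b) monoid_scheme \<Rightarrow> 'a set \<Rightarrow> 'a set \<Rightarrow> bool" where
  "EC_triple G H H' \<longleftrightarrow> subgroup H G \<and> subgroup H' G \<and>
     (\<forall>h\<in>H. \<exists>h'\<in>H'. conjugate_in G h h') \<and>
     (\<forall>h'\<in>H'. \<exists>h\<in>H. conjugate_in G h' h)"

definition GL :: "nat \<Rightarrow> 'a::field mat monoid" where
  "GL n = \<lparr> carrier = {A \<in> carrier_mat n n. det A \<noteq> 0}, mult = (*), one = 1\<^sub>m n \<rparr>"

definition scalar_mats :: "nat \<Rightarrow> 'a::field mat set" where
  "scalar_mats n = {c \<cdot>\<^sub>m 1\<^sub>m n | c. c \<noteq> 0}"

definition PGL :: "nat \<Rightarrow> 'a::field mat set monoid" where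
  "PGL n = GL n Mod scalar_mats n"

definition proj_point :: "nat \<Rightarrow> 'a::field vec \<Rightarrow> 'a vec set" where
  "proj_point n v = {c \<cdot>\<^sub>v v | c. True}"

definition is_proj_point :: "nat \<Rightarrow> 'a::field vec set \<Rightarrow> bool" where
  "is_proj_point n X \<longleftrightarrow> (\<exists>v\<in>carrier_vec n. v \<noteq> 0\<^sub>v n \<and> X = proj_point n v)"

definition proj_hyperplane :: "nat \<Rightarrow> 'a::field vec \<Rightarrow> 'a vec set" where
  "proj_hyperplane n w = {u \<in> carrier_vec n. w \<bullet> u = 0}"

definition is_proj_hyperplane :: "nat \<Rightarrow> 'a::field vec set \<Rightarrow> bool" where
  "is_proj_hyperplane n X \<longleftrightarrow> (\<exists>w\<in>carrier_vec n. w \<noteq> 0\<^sub>v n \<and> X = proj_hyperplane n w)"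

text \<open>Stabilizer in PGL_n(F) of a subspace X of F^n under the natural action
  [A] . X = A X (well defined since scalars fix every subspace).\<close>
definition PGL_stab :: "nat \<Rightarrow> 'a::field vec set \<Rightarrow> 'a mat set set" where
  "PGL_stab n X = {scalar_mats n #>\<^bsub>GL n\<^esub> A | A.
       A \<in> carrier (GL n) \<and> (\<lambda>u. A *\<^sub>v u) ` X = X}"

end

theory Submission
  imports Defs
begin

text \<open>
  Wreath-product step: if every element of \<open>L\<close> is conjugate into \<open>L'\<close>, so is every element of
  \<open>L \<wr> S\<^sub>2\<close>. For \<open>((a, b), 1)\<close> conjugate each coordinate separately; an element \<open>((a, b), \<tau>)\<close>
  with the transposition \<open>\<tau>\<close> is conjugate by a base element to \<open>((a b, 1), \<tau>)\<close>, so only the product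
  \<open>a b\<close> has to be moved into \<open>L'\<close>.

  Projective step: \<open>A\<close> fixes the point \<open>\<langle>v\<rangle>\<close> iff \<open>v\<close> is an eigenvector of \<open>A\<close>, and fixes the
  hyperplane \<open>w\<^sup>\<bottom>\<close> iff \<open>w\<close> is an eigenvector of \<open>A\<^sup>T\<close>. Since \<open>A\<close> and \<open>A\<^sup>T\<close> have the same
  eigenvalues, every point stabilizer element fixes some hyperplane and vice versa, and as
  \<open>GL\<^sub>n\<close> acts transitively on points and on hyperplanes, it is conjugate into the stabilizer of
  the prescribed one. Hence \<open>(PGL\<^sub>n, S\<^sub>x, S\<^sub>\<Pi>)\<close> is an EC-triple, and the wreath-product step lifts this.
\<close>

section \<open>Wreath products with \<open>S\<^sub>2\<close>\<close>

definition permutation_group :: "'i set \<Rightarrow> ('i \<Rightarrow> 'i) set \<Rightarrow> bool" where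
  "permutation_group \<Omega> P \<longleftrightarrow>
     (\<forall>p\<in>P. p permutes \<Omega>) \<and> id \<in> P \<and> (\<forall>p\<in>P. \<forall>q\<in>P. p \<circ> q \<in> P) \<and> (\<forall>p\<in>P. inv_into UNIV p \<in> P)"

lemma permutation_groupD:
  assumes "permutation_group \<Omega> P"
  shows "id \<in> P" and "\<And>p q. p \<in> P \<Longrightarrow> q \<in> P \<Longrightarrow> p \<circ> q \<in> P"
    and "\<And>p. p \<in> P \<Longrightarrow> inv_into UNIV p \<in> P" and "\<And>p. p \<in> P \<Longrightarrow> bij p"
    and "\<And>p \<omega>. p \<in> P \<Longrightarrow> \<omega> \<in> \<Omega> \<Longrightarrow> p \<omega> \<in> \<Omega>"
    and "\<And>p \<omega>. p \<in> P \<Longrightarrow> \<omega> \<in> \<Omega> \<Longrightarrow> inv_into UNIV p \<omega> \<in> \<Omega>"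
  using assms unfolding permutation_group_def by (auto intro: permutes_bij simp: permutes_in_image)

lemma permutation_group_Sym2: "permutation_group {1, 2} Sym2"
  by (auto simp: permutation_group_def Sym2_def intro: permutes_compose permutes_inv)

lemma conjugate_in_of_commute:
  assumes "group G" "x \<in> carrier G" "h \<in> carrier G" "h' \<in> carrier G"
    and "x \<otimes>\<^bsub>G\<^esub> h = h' \<otimes>\<^bsub>G\<^esub> x"
  shows "conjugate_in G h h'"
proof -
  interpret G: group G by fact
  have "x \<otimes>\<^bsub>G\<^esub> h \<otimes>\<^bsub>G\<^esub> inv\<^bsub>G\<^esub> x = h'"
    using assms by (simp add: G.m_assoc)
  then show ?thesis unfolding conjugate_in_def using assms(2) by blast
qed

abbreviation swap12 :: "nat \<Rightarrow> nat" where
  "swap12 \<equiv> Transposition.transpose 1 2"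

lemma Sym2_eq: "Sym2 = {id, swap12}"
  by (auto simp: Sym2_def permutes_doubleton_iff)

lemma wreath_carrier: "carrier (wreath S \<Omega> P) = {(g, p). g \<in> \<Omega> \<rightarrow>\<^sub>E carrier S \<and> p \<in> P}"
  by (simp add: wreath_def)

lemma wreath_mult:
  "(g, p) \<otimes>\<^bsub>wreath S \<Omega> P\<^esub> (g', p') = ((\<lambda>\<omega>\<in>\<Omega>. g \<omega> \<otimes>\<^bsub>S\<^esub> g' (inv_into UNIV p \<omega>)), p \<circ> p')"
  by (simp add: wreath_def)

lemma wreath_one: "\<one>\<^bsub>wreath S \<Omega> P\<^esub> = ((\<lambda>\<omega>\<in>\<Omega>. \<one>\<^bsub>S\<^esub>), id)"
  by (simp add: wreath_def)

lemma wreath_mult_id: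
  "(g, id) \<otimes>\<^bsub>wreath S \<Omega> P\<^esub> (g', p') = ((\<lambda>\<omega>\<in>\<Omega>. g \<omega> \<otimes>\<^bsub>S\<^esub> g' \<omega>), p')"
  by (simp add: wreath_mult)

lemma wreath_mult_swap12:
  "(g, swap12) \<otimes>\<^bsub>wreath S \<Omega> P\<^esub> (g', p') = ((\<lambda>\<omega>\<in>\<Omega>. g \<omega> \<otimes>\<^bsub>S\<^esub> g' (swap12 \<omega>)), swap12 \<circ> p')"
  by (simp add: wreath_mult)

context
  fixes S :: "('g, 'm) monoid_scheme" and \<Omega> :: "'i set" and P
  assumes S: "group S" and P: "permutation_group \<Omega> P"
begin

interpretation S: group S by (fact S)

lemma wreath_l_inv:
  assumes "g \<in> \<Omega> \<rightarrow>\<^sub>E carrier S" "p \<in> P"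
  shows "((\<lambda>\<omega>\<in>\<Omega>. inv\<^bsub>S\<^esub> g (p \<omega>)), inv_into UNIV p) \<otimes>\<^bsub>wreath S \<Omega> P\<^esub> (g, p) = \<one>\<^bsub>wreath S \<Omega> P\<^esub>"
  using assms permutation_groupD(5)[OF P]
  by (auto simp: wreath_mult wreath_one inv_inv_eq permutation_groupD(4)[OF P] bij_is_inj PiE_iff
      intro!: restrict_ext)

lemma wreath_group: "group (wreath S \<Omega> P)"
proof (rule groupI)
  let ?W = "wreath S \<Omega> P"
  note P_closed = permutation_groupD[OF P]
  show "x \<otimes>\<^bsub>?W\<^esub> y \<in> carrier ?W" if "x \<in> carrier ?W" "y \<in> carrier ?W" for x y
    using that P_closed by (auto simp: wreath_carrier wreath_mult PiE_iff)
  show "\<one>\<^bsub>?W\<^esub> \<in> carrier ?W"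
    using P_closed by (auto simp: wreath_carrier wreath_one)
  show "x \<otimes>\<^bsub>?W\<^esub> y \<otimes>\<^bsub>?W\<^esub> z = x \<otimes>\<^bsub>?W\<^esub> (y \<otimes>\<^bsub>?W\<^esub> z)"
    if "x \<in> carrier ?W" "y \<in> carrier ?W" "z \<in> carrier ?W" for x y z
    using that P_closed(6)
    by (auto simp: wreath_carrier wreath_mult o_inv_distrib P_closed(4) o_assoc S.m_assoc
        PiE_iff intro!: restrict_ext)
  show "\<one>\<^bsub>?W\<^esub> \<otimes>\<^bsub>?W\<^esub> x = x" if "x \<in> carrier ?W" for x
    using that by (auto simp: wreath_carrier wreath_one wreath_mult_id PiE_iff fun_eq_iff extensional_def)
  show "\<exists>y\<in>carrier ?W. y \<otimes>\<^bsub>?W\<^esub> x = \<one>\<^bsub>?W\<^esub>" if xW: "x \<in> carrier ?W" for x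
  proof -
    obtain g p where x: "x = (g, p)" "g \<in> \<Omega> \<rightarrow>\<^sub>E carrier S" "p \<in> P"
      using xW unfolding wreath_carrier by blast
    let ?y = "((\<lambda>\<omega>\<in>\<Omega>. inv\<^bsub>S\<^esub> g (p \<omega>)), inv_into UNIV p)"
    have "?y \<otimes>\<^bsub>?W\<^esub> x = \<one>\<^bsub>?W\<^esub>"
      using wreath_l_inv x by simp
    moreover have "?y \<in> carrier ?W"
      using x P_closed by (auto simp: wreath_carrier)
    ultimately show ?thesis by blast
  qed
qed

interpretation W: group "wreath S \<Omega> P" by (rule wreath_group)

lemma wreath_inv:
  assumes "g \<in> \<Omega> \<rightarrow>\<^sub>E carrier S" "p \<in> P"
  shows "inv\<^bsub>wreath S \<Omega> P\<^esub> (g, p) = ((\<lambda>\<omega>\<in>\<Omega>. inv\<^bsub>S\<^esub> g (p \<omega>)), inv_into UNIV p)"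
proof (rule W.inv_equality[OF wreath_l_inv[OF assms]])
  show "((\<lambda>\<omega>\<in>\<Omega>. inv\<^bsub>S\<^esub> g (p \<omega>)), inv_into UNIV p) \<in> carrier (wreath S \<Omega> P)"
    using assms permutation_groupD[OF P] by (auto simp: wreath_carrier)
qed (use assms in \<open>simp add: wreath_carrier\<close>)

lemma wreath_sub_subgroup:
  assumes L: "subgroup L S"
  shows "subgroup (wreath_sub L \<Omega> P) (wreath S \<Omega> P)"
proof (rule W.subgroupI)
  have L_sub: "L \<subseteq> carrier S" by (rule subgroup.subset[OF L])
  note P_closed = permutation_groupD[OF P]
  show "wreath_sub L \<Omega> P \<subseteq> carrier (wreath S \<Omega> P)"
    using L_sub by (auto simp: wreath_sub_def wreath_carrier)
  have "((\<lambda>\<omega>\<in>\<Omega>. \<one>\<^bsub>S\<^esub>), id) \<in> wreath_sub L \<Omega> P"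
    using P_closed subgroup.one_closed[OF L] by (auto simp: wreath_sub_def)
  then show "wreath_sub L \<Omega> P \<noteq> {}" by blast
  show "inv\<^bsub>wreath S \<Omega> P\<^esub> x \<in> wreath_sub L \<Omega> P" if xL: "x \<in> wreath_sub L \<Omega> P" for x
  proof -
    obtain g p where x: "x = (g, p)" "g \<in> \<Omega> \<rightarrow>\<^sub>E L" "p \<in> P"
      using xL unfolding wreath_sub_def by blast
    then have "g \<in> \<Omega> \<rightarrow>\<^sub>E carrier S" using L_sub by auto
    then show ?thesis
      using x P_closed subgroup.m_inv_closed[OF L]
      by (auto simp: wreath_sub_def wreath_inv PiE_iff)
  qed
  show "x \<otimes>\<^bsub>wreath S \<Omega> P\<^esub> y \<in> wreath_sub L \<Omega> P"
    if "x \<in> wreath_sub L \<Omega> P" "y \<in> wreath_sub L \<Omega> P" for x y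
    using that P_closed subgroup.m_closed[OF L]
    by (auto simp: wreath_sub_def wreath_mult PiE_iff)
qed

lemma wreath_conjugate_id:
  assumes "g \<in> \<Omega> \<rightarrow>\<^sub>E carrier S" "m \<in> \<Omega> \<rightarrow>\<^sub>E carrier S"
  shows "conjugate_in (wreath S \<Omega> P) (g, id) ((\<lambda>\<omega>\<in>\<Omega>. m \<omega> \<otimes>\<^bsub>S\<^esub> g \<omega> \<otimes>\<^bsub>S\<^esub> inv\<^bsub>S\<^esub> m \<omega>), id)"
proof -
  have id: "id \<in> P" by (rule permutation_groupD(1)[OF P])
  have "(m, id) \<in> carrier (wreath S \<Omega> P)" "(g, id) \<in> carrier (wreath S \<Omega> P)"
    using assms id by (auto simp: wreath_carrier)
  moreover have "inv\<^bsub>wreath S \<Omega> P\<^esub> (m, id) = ((\<lambda>\<omega>\<in>\<Omega>. inv\<^bsub>S\<^esub> m \<omega>), id)"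
    using wreath_inv[OF assms(2) id] by simp
  ultimately show ?thesis
    unfolding conjugate_in_def using assms
    by (auto simp: wreath_mult_id PiE_iff intro!: bexI[of _ "(m, id)"] restrict_ext)
qed

end

lemma wreath_conjugate_swap12:
  assumes S: "group S" and g: "g \<in> {1, 2} \<rightarrow>\<^sub>E carrier S" and m: "m \<in> carrier S"
  shows "conjugate_in (wreath S {1, 2} Sym2) (g, swap12)
           ((\<lambda>\<omega>\<in>{1, 2}. if \<omega> = 1 then m \<otimes>\<^bsub>S\<^esub> (g 1 \<otimes>\<^bsub>S\<^esub> g 2) \<otimes>\<^bsub>S\<^esub> inv\<^bsub>S\<^esub> m else \<one>\<^bsub>S\<^esub>), swap12)"
proof -
  interpret S: group S by (fact S)
  interpret W: group "wreath S {1, 2} Sym2" by (rule wreath_group[OF S permutation_group_Sym2])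
  have g12: "g 1 \<in> carrier S" "g 2 \<in> carrier S" using g by auto
  define x where "x = ((\<lambda>\<omega>\<in>{1::nat, 2}. if \<omega> = 1 then m else m \<otimes>\<^bsub>S\<^esub> inv\<^bsub>S\<^esub> g 2), id :: nat \<Rightarrow> nat)"
  define h' where "h' = ((\<lambda>\<omega>\<in>{1::nat, 2}. if \<omega> = 1 then m \<otimes>\<^bsub>S\<^esub> (g 1 \<otimes>\<^bsub>S\<^esub> g 2) \<otimes>\<^bsub>S\<^esub> inv\<^bsub>S\<^esub> m else \<one>\<^bsub>S\<^esub>), swap12)"
  have "x \<otimes>\<^bsub>wreath S {1, 2} Sym2\<^esub> (g, swap12) = h' \<otimes>\<^bsub>wreath S {1, 2} Sym2\<^esub> x"
    unfolding x_def h'_def wreath_mult_id wreath_mult_swap12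
    using m g12 by (auto simp: S.m_assoc intro!: restrict_ext simp flip: S.m_assoc[of "inv\<^bsub>S\<^esub> m" m])
  moreover have "x \<in> carrier (wreath S {1, 2} Sym2)" "(g, swap12) \<in> carrier (wreath S {1, 2} Sym2)"
    "h' \<in> carrier (wreath S {1, 2} Sym2)"
    using m g g12 by (auto simp: x_def h'_def wreath_carrier Sym2_eq)
  ultimately show ?thesis
    unfolding h'_def[symmetric] using conjugate_in_of_commute[OF W.is_group] by blast
qed

lemma wreath_Sym2_conjugate_into:
  assumes S: "group S" and L: "subgroup L S" and L': "subgroup L' S"
    and conj: "\<forall>a\<in>L. \<exists>a'\<in>L'. conjugate_in S a a'"
    and hL: "h \<in> wreath_sub L {1, 2} Sym2"
  shows "\<exists>h'\<in>wreath_sub L' {1, 2} Sym2. conjugate_in (wreath S {1, 2} Sym2) h h'"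
proof -
  interpret S: group S by (fact S)
  have conj': "\<exists>m\<in>carrier S. m \<otimes>\<^bsub>S\<^esub> a \<otimes>\<^bsub>S\<^esub> inv\<^bsub>S\<^esub> m \<in> L'" if "a \<in> L" for a
    using conj that unfolding conjugate_in_def by blast
  obtain g p where h: "h = (g, p)" "g \<in> {1, 2} \<rightarrow>\<^sub>E L" "p \<in> Sym2"
    using hL unfolding wreath_sub_def by blast
  have g: "g \<in> {1, 2} \<rightarrow>\<^sub>E carrier S" using h(2) subgroup.subset[OF L] by auto
  from \<open>p \<in> Sym2\<close> consider "p = id" | "p = swap12" by (auto simp: Sym2_eq)
  then show ?thesis
  proof cases
    case 1
    have "\<forall>\<omega>\<in>{1, 2}. \<exists>m. m \<in> carrier S \<and> m \<otimes>\<^bsub>S\<^esub> g \<omega> \<otimes>\<^bsub>S\<^esub> inv\<^bsub>S\<^esub> m \<in> L'"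
      using conj' h(2) by blast
    from bchoice[OF this] obtain m
      where m: "\<forall>\<omega>\<in>{1, 2}. m \<omega> \<in> carrier S \<and> m \<omega> \<otimes>\<^bsub>S\<^esub> g \<omega> \<otimes>\<^bsub>S\<^esub> inv\<^bsub>S\<^esub> m \<omega> \<in> L'" ..
    define m' where "m' = restrict m {1, 2}"
    have m': "m' \<in> {1, 2} \<rightarrow>\<^sub>E carrier S" using m by (simp add: m'_def)
    let ?h' = "((\<lambda>\<omega>\<in>{1, 2}. m' \<omega> \<otimes>\<^bsub>S\<^esub> g \<omega> \<otimes>\<^bsub>S\<^esub> inv\<^bsub>S\<^esub> m' \<omega>), id)"
    have "?h' \<in> wreath_sub L' {1, 2} Sym2"
      using m by (simp add: wreath_sub_def m'_def Sym2_eq)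
    moreover have "conjugate_in (wreath S {1, 2} Sym2) h ?h'"
      using wreath_conjugate_id[OF S permutation_group_Sym2 g m'] h(1) 1 by simp
    ultimately show ?thesis by blast
  next
    case 2
    have "g 1 \<otimes>\<^bsub>S\<^esub> g 2 \<in> L" using h(2) subgroup.m_closed[OF L] by auto
    then obtain m where m: "m \<in> carrier S" "m \<otimes>\<^bsub>S\<^esub> (g 1 \<otimes>\<^bsub>S\<^esub> g 2) \<otimes>\<^bsub>S\<^esub> inv\<^bsub>S\<^esub> m \<in> L'"
      using conj' by blast
    let ?h' = "((\<lambda>\<omega>\<in>{1, 2}. if \<omega> = 1 then m \<otimes>\<^bsub>S\<^esub> (g 1 \<otimes>\<^bsub>S\<^esub> g 2) \<otimes>\<^bsub>S\<^esub> inv\<^bsub>S\<^esub> m else \<one>\<^bsub>S\<^esub>), swap12)"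
    have "?h' \<in> wreath_sub L' {1, 2} Sym2"
      using m(2) subgroup.one_closed[OF L'] by (simp add: wreath_sub_def Sym2_eq)
    moreover have "conjugate_in (wreath S {1, 2} Sym2) h ?h'"
      using wreath_conjugate_swap12[OF S g m(1)] h(1) 2 by simp
    ultimately show ?thesis by blast
  qed
qed

lemma EC_triple_wreath_Sym2:
  assumes S: "group S" and EC: "EC_triple S L L'"
  shows "EC_triple (wreath S {1, 2} Sym2) (wreath_sub L {1, 2} Sym2) (wreath_sub L' {1, 2} Sym2)"
proof -
  have L: "subgroup L S" "subgroup L' S"
    and conj: "\<forall>a\<in>L. \<exists>a'\<in>L'. conjugate_in S a a'" "\<forall>a'\<in>L'. \<exists>a\<in>L. conjugate_in S a' a"
    using EC unfolding EC_triple_def by auto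
  show ?thesis
    unfolding EC_triple_def
    using wreath_sub_subgroup[OF S permutation_group_Sym2 L(1)] wreath_sub_subgroup[OF S permutation_group_Sym2 L(2)]
      wreath_Sym2_conjugate_into[OF S L(1) L(2) conj(1)]
      wreath_Sym2_conjugate_into[OF S L(2) L(1) conj(2)]
    by blast
qed

section \<open>\<open>GL\<^sub>n\<close>, \<open>PGL\<^sub>n\<close> and stabilizers of subspaces\<close>

lemma GL_carrier: "carrier (GL n) = {A \<in> carrier_mat n n. det A \<noteq> 0}"
  by (simp add: GL_def)

lemma GL_mult: "A \<otimes>\<^bsub>GL n\<^esub> B = A * B"
  by (simp add: GL_def)

lemma GL_one: "\<one>\<^bsub>GL n\<^esub> = 1\<^sub>m n"
  by (simp add: GL_def)

lemma GL_carrier_mat: "A \<in> carrier (GL n) \<Longrightarrow> A \<in> carrier_mat n n"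
  by (simp add: GL_carrier)

lemma GL_of_left_inverse:
  assumes "A \<in> carrier_mat n n" "B \<in> carrier_mat n n" "B * A = (1\<^sub>m n :: 'a::field mat)"
  shows "A \<in> carrier (GL n)"
  using assms det_mult[OF assms(2,1)] by (auto simp: GL_carrier)

lemma group_GL: "group (GL n :: 'a::field mat monoid)"
proof (rule groupI)
  show "x \<otimes>\<^bsub>GL n\<^esub> y \<in> carrier (GL n)" if "x \<in> carrier (GL n)" "y \<in> carrier (GL n)" for x y :: "'a mat"
    using that by (auto simp: GL_carrier GL_mult det_mult)
  show "x \<otimes>\<^bsub>GL n\<^esub> y \<otimes>\<^bsub>GL n\<^esub> z = x \<otimes>\<^bsub>GL n\<^esub> (y \<otimes>\<^bsub>GL n\<^esub> z)"
    if "x \<in> carrier (GL n)" "y \<in> carrier (GL n)" "z \<in> carrier (GL n)" for x y z :: "'a mat"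
    using that by (simp add: GL_carrier GL_mult assoc_mult_mat[of _ n n _ n _ n])
  show "\<exists>y\<in>carrier (GL n). y \<otimes>\<^bsub>GL n\<^esub> x = \<one>\<^bsub>GL n\<^esub>" if "x \<in> carrier (GL n)" for x :: "'a mat"
  proof -
    have x: "x \<in> carrier_mat n n" "det x \<noteq> 0" using that by (auto simp: GL_carrier)
    obtain y where y: "y \<in> carrier_mat n n" "y * x = 1\<^sub>m n"
      using det_non_zero_imp_unit[OF x, of "()"] by (auto simp: Units_def ring_mat_def)
    have "y \<in> carrier (GL n)"
      by (rule GL_of_left_inverse[OF y(1) x(1) mat_mult_left_right_inverse[OF y(1) x(1) y(2)]])
    then show ?thesis using y by (auto simp: GL_mult GL_one)
  qed
qed (auto simp: GL_carrier GL_mult GL_one)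

interpretation GL: group "GL n :: 'a::field mat monoid" for n
  by (rule group_GL)

lemma GL_mult_closed: "A \<in> carrier (GL n) \<Longrightarrow> B \<in> carrier (GL n) \<Longrightarrow> A * B \<in> carrier (GL n :: 'a::field mat monoid)"
  using GL.m_closed by (simp add: GL_mult)

lemma GL_inv:
  assumes "A \<in> carrier (GL n :: 'a::field mat monoid)"
  shows "inv\<^bsub>GL n\<^esub> A \<in> carrier_mat n n" "inv\<^bsub>GL n\<^esub> A * A = 1\<^sub>m n" "A * inv\<^bsub>GL n\<^esub> A = 1\<^sub>m n"
  using GL.inv_closed[OF assms] GL.l_inv[OF assms] GL.r_inv[OF assms]
  by (auto simp: GL_carrier GL_mult GL_one)

lemma GL_inv_cancel:
  assumes "A \<in> carrier (GL n :: 'a::field mat monoid)" "v \<in> carrier_vec n"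
  shows "A *\<^sub>v (inv\<^bsub>GL n\<^esub> A *\<^sub>v v) = v"
  using assoc_mult_mat_vec[OF GL_carrier_mat[OF assms(1)] GL_inv(1)[OF assms(1)] assms(2)]
    GL_inv(3)[OF assms(1)] assms(2) by simp

lemma transpose_mat_GL:
  assumes "A \<in> carrier (GL n :: 'a::field mat monoid)"
  shows "transpose_mat A \<in> carrier (GL n)"
  using assms det_transpose[of A n] by (simp add: GL_carrier)

lemma scalar_mat_mult_left: "A \<in> carrier_mat n m \<Longrightarrow> (c \<cdot>\<^sub>m 1\<^sub>m n) * A = (c::'a::field) \<cdot>\<^sub>m A"
  by (metis mult_smult_assoc_mat one_carrier_mat left_mult_one_mat)

lemma scalar_mat_mult_right: "A \<in> carrier_mat m n \<Longrightarrow> A * (c \<cdot>\<^sub>m 1\<^sub>m n) = (c::'a::field) \<cdot>\<^sub>m A"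
  by (metis mult_smult_distrib one_carrier_mat right_mult_one_mat)

lemma smult_smult_mat: "a \<cdot>\<^sub>m (b \<cdot>\<^sub>m A) = (a * b :: 'a::semigroup_mult) \<cdot>\<^sub>m A"
  by (rule eq_matI) (simp_all add: mult.assoc)

lemma one_smult_mat: "(1 :: 'a::monoid_mult) \<cdot>\<^sub>m A = A"
  by (rule eq_matI) simp_all

lemma scalar_mat_mult: "(c \<cdot>\<^sub>m 1\<^sub>m n) * (d \<cdot>\<^sub>m 1\<^sub>m n) = (c * d :: 'a::field) \<cdot>\<^sub>m 1\<^sub>m n"
  by (simp add: scalar_mat_mult_left[of "d \<cdot>\<^sub>m 1\<^sub>m n" n n] smult_smult_mat)

lemma scalar_mat_GL: "c \<noteq> 0 \<Longrightarrow> c \<cdot>\<^sub>m 1\<^sub>m n \<in> carrier (GL n :: 'a::field mat monoid)"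
  by (simp add: GL_carrier)

lemma scalar_mats_subgroup: "subgroup (scalar_mats n) (GL n :: 'a::field mat monoid)"
proof (rule GL.subgroupI)
  show "scalar_mats n \<subseteq> carrier (GL n :: 'a mat monoid)"
    using scalar_mat_GL unfolding scalar_mats_def by blast
  have "1 \<cdot>\<^sub>m 1\<^sub>m n \<in> (scalar_mats n :: 'a mat set)"
    unfolding scalar_mats_def using one_neq_zero by blast
  then show "scalar_mats n \<noteq> ({} :: 'a mat set)" by blast
next
  fix a :: "'a mat" assume "a \<in> scalar_mats n"
  then obtain c where c: "c \<noteq> 0" "a = c \<cdot>\<^sub>m 1\<^sub>m n" unfolding scalar_mats_def by blast
  have "(inverse c \<cdot>\<^sub>m 1\<^sub>m n) \<otimes>\<^bsub>GL n\<^esub> a = \<one>\<^bsub>GL n\<^esub>"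
    using c by (simp add: GL_mult GL_one scalar_mat_mult one_smult_mat)
  from GL.inv_equality[OF this] have "inv\<^bsub>GL n\<^esub> a = inverse c \<cdot>\<^sub>m 1\<^sub>m n"
    using scalar_mat_GL[of c n] scalar_mat_GL[of "inverse c" n] c by simp
  moreover have "inverse c \<noteq> 0" using c by simp
  ultimately show "inv\<^bsub>GL n\<^esub> a \<in> scalar_mats n"
    unfolding scalar_mats_def by blast
next
  fix a b :: "'a mat" assume "a \<in> scalar_mats n" "b \<in> scalar_mats n"
  then obtain c d where "c \<noteq> 0" "a = c \<cdot>\<^sub>m 1\<^sub>m n" "d \<noteq> 0" "b = d \<cdot>\<^sub>m 1\<^sub>m n"
    unfolding scalar_mats_def by blast
  then have "a \<otimes>\<^bsub>GL n\<^esub> b = (c * d) \<cdot>\<^sub>m 1\<^sub>m n" "c * d \<noteq> 0"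
    by (simp_all add: GL_mult scalar_mat_mult)
  then show "a \<otimes>\<^bsub>GL n\<^esub> b \<in> scalar_mats n"
    unfolding scalar_mats_def by blast
qed

lemma scalar_mats_normal: "scalar_mats n \<lhd> (GL n :: 'a::field mat monoid)"
proof (rule GL.normal_inv_iff[THEN iffD2], intro conjI scalar_mats_subgroup ballI)
  fix x h :: "'a mat" assume x: "x \<in> carrier (GL n)" and h: "h \<in> scalar_mats n"
  then obtain c where c: "h = c \<cdot>\<^sub>m 1\<^sub>m n" unfolding scalar_mats_def by blast
  have "x \<otimes>\<^bsub>GL n\<^esub> h \<otimes>\<^bsub>GL n\<^esub> inv\<^bsub>GL n\<^esub> x = c \<cdot>\<^sub>m (x * inv\<^bsub>GL n\<^esub> x)"
    using c GL_carrier_mat[OF x] GL_inv(1)[OF x]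
    by (simp add: GL_mult scalar_mat_mult_right mult_smult_assoc_mat[of _ n n _ n])
  also have "\<dots> = h" using c GL_inv(3)[OF x] by simp
  finally show "x \<otimes>\<^bsub>GL n\<^esub> h \<otimes>\<^bsub>GL n\<^esub> inv\<^bsub>GL n\<^esub> x \<in> scalar_mats n" using h by simp
qed

interpretation scalar_mats: normal "scalar_mats n" "GL n :: 'a::field mat monoid" for n
  by (rule scalar_mats_normal)

lemma group_PGL: "group (PGL n :: 'a::field mat set monoid)"
  unfolding PGL_def by (rule scalar_mats.factorgroup_is_group)

abbreviation PGL_of :: "nat \<Rightarrow> 'a::field mat \<Rightarrow> 'a mat set" where
  "PGL_of n A \<equiv> scalar_mats n #>\<^bsub>GL n\<^esub> A"

lemma PGL_of_carrier: "A \<in> carrier (GL n) \<Longrightarrow> PGL_of n A \<in> carrier (PGL n)"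
  unfolding PGL_def carrier_FactGroup by blast

lemma PGL_of_mult:
  "A \<in> carrier (GL n) \<Longrightarrow> B \<in> carrier (GL n) \<Longrightarrow> PGL_of n A \<otimes>\<^bsub>PGL n\<^esub> PGL_of n B = PGL_of n (A * B)"
  unfolding PGL_def using scalar_mats.rcos_sum by (simp add: GL_mult)

lemma PGL_of_inv:
  assumes "A \<in> carrier (GL n :: 'a::field mat monoid)"
  shows "inv\<^bsub>PGL n\<^esub> PGL_of n A = PGL_of n (inv\<^bsub>GL n\<^esub> A)"
  using scalar_mats.inv_FactGroup[OF PGL_of_carrier[OF assms, unfolded PGL_def]]
    scalar_mats.rcos_inv[OF assms]
  unfolding PGL_def by simp

definition stabilizes :: "'a::field mat \<Rightarrow> 'a vec set \<Rightarrow> bool" where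
  "stabilizes A X \<longleftrightarrow> (\<lambda>u. A *\<^sub>v u) ` X = X"

lemma PGL_stab_eq: "PGL_stab n X = {PGL_of n A | A. A \<in> carrier (GL n) \<and> stabilizes A X}"
  unfolding PGL_stab_def stabilizes_def ..

lemma image_mult_mat_vec:
  assumes "A \<in> carrier_mat n n" "B \<in> carrier_mat n n" "X \<subseteq> carrier_vec n"
  shows "(\<lambda>u. (A * B) *\<^sub>v u) ` X = (\<lambda>u. A *\<^sub>v u) ` (\<lambda>u. B *\<^sub>v u) ` X"
proof -
  have "\<And>u. u \<in> X \<Longrightarrow> (A * B) *\<^sub>v u = A *\<^sub>v (B *\<^sub>v u)" using assms by auto
  then show ?thesis unfolding image_image by (rule image_cong[OF refl])
qed

lemma image_one_mat_vec:
  assumes "(X :: 'a::semiring_1 vec set) \<subseteq> carrier_vec n"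
  shows "(\<lambda>u. 1\<^sub>m n *\<^sub>v u) ` X = X"
proof -
  have "\<And>u. u \<in> X \<Longrightarrow> 1\<^sub>m n *\<^sub>v u = u" using assms by auto
  then show ?thesis by simp
qed

lemma image_mat_vec_subset: "A \<in> carrier_mat n n \<Longrightarrow> (\<lambda>u. A *\<^sub>v u) ` X \<subseteq> carrier_vec n"
  by (auto intro!: carrier_vecI)

lemma stabilizes_mult:
  assumes "A \<in> carrier_mat n n" "B \<in> carrier_mat n n" "X \<subseteq> carrier_vec n"
    and "stabilizes A X" "stabilizes B X"
  shows "stabilizes (A * B) X"
  using image_mult_mat_vec[OF assms(1-3)] assms(4,5) unfolding stabilizes_def by simp

lemma image_GL_inv_image:
  assumes "B \<in> carrier (GL n)" "Y \<subseteq> carrier_vec n"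
  shows "(\<lambda>u. inv\<^bsub>GL n\<^esub> B *\<^sub>v u) ` (\<lambda>u. B *\<^sub>v u) ` Y = (Y :: 'a::field vec set)"
proof -
  have "(\<lambda>u. inv\<^bsub>GL n\<^esub> B *\<^sub>v u) ` (\<lambda>u. B *\<^sub>v u) ` Y = (\<lambda>u. (inv\<^bsub>GL n\<^esub> B * B) *\<^sub>v u) ` Y"
    using image_mult_mat_vec[OF GL_inv(1)[OF assms(1)] GL_carrier_mat[OF assms(1)] assms(2)] ..
  also have "\<dots> = Y"
    unfolding GL_inv(2)[OF assms(1)] by (rule image_one_mat_vec[OF assms(2)])
  finally show ?thesis .
qed

lemma stabilizes_GL_inv:
  assumes "A \<in> carrier (GL n)" "X \<subseteq> carrier_vec n" "stabilizes A X"
  shows "stabilizes (inv\<^bsub>GL n\<^esub> A) X"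
  using image_GL_inv_image[OF assms(1,2)] assms(3) unfolding stabilizes_def by simp

lemma stabilizes_conjugate:
  assumes A: "A \<in> carrier_mat n n" and B: "B \<in> carrier (GL n)" and Y: "Y \<subseteq> carrier_vec n"
    and stab: "stabilizes A Y" and BY: "(\<lambda>u. B *\<^sub>v u) ` Y = Z"
  shows "stabilizes (B * A * inv\<^bsub>GL n\<^esub> B) (Z :: 'a::field vec set)"
proof -
  have B': "B \<in> carrier_mat n n" "inv\<^bsub>GL n\<^esub> B \<in> carrier_mat n n"
    using GL_carrier_mat[OF B] GL_inv(1)[OF B] .
  have Z: "Z \<subseteq> carrier_vec n" using BY image_mat_vec_subset[OF B'(1)] by blast
  have "(\<lambda>u. (B * A * inv\<^bsub>GL n\<^esub> B) *\<^sub>v u) ` Z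
      = (\<lambda>u. B *\<^sub>v u) ` (\<lambda>u. A *\<^sub>v u) ` (\<lambda>u. inv\<^bsub>GL n\<^esub> B *\<^sub>v u) ` Z"
    using image_mult_mat_vec[OF mult_carrier_mat[OF B'(1) A] B'(2) Z]
      image_mult_mat_vec[OF B'(1) A image_mat_vec_subset[OF B'(2)]] by simp
  also have "\<dots> = Z"
    using image_GL_inv_image[OF B Y] stab BY unfolding stabilizes_def by simp
  finally show ?thesis unfolding stabilizes_def .
qed

lemma PGL_stab_subgroup:
  assumes X: "X \<subseteq> carrier_vec n"
  shows "subgroup (PGL_stab n X) (PGL n :: 'a::field mat set monoid)"
proof -
  interpret PGL: group "PGL n :: 'a mat set monoid" by (rule group_PGL)
  show ?thesis
  proof (rule PGL.subgroupI)
    show "PGL_stab n X \<subseteq> carrier (PGL n :: 'a mat set monoid)"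
      unfolding PGL_stab_eq using PGL_of_carrier by blast
    have "stabilizes (1\<^sub>m n) X" unfolding stabilizes_def by (rule image_one_mat_vec[OF X])
    then have "PGL_of n (1\<^sub>m n) \<in> PGL_stab n X"
      unfolding PGL_stab_eq using GL.one_closed[of n] by (auto simp: GL_one)
    then show "PGL_stab n X \<noteq> {}" by blast
  next
    fix a assume "a \<in> PGL_stab n X"
    then obtain A where A: "a = PGL_of n A" "A \<in> carrier (GL n)" "stabilizes A X"
      unfolding PGL_stab_eq by blast
    then show "inv\<^bsub>PGL n\<^esub> a \<in> PGL_stab n X"
      unfolding PGL_stab_eq using PGL_of_inv GL.inv_closed stabilizes_GL_inv[OF _ X] by blast
  next
    fix a b assume "a \<in> PGL_stab n X" "b \<in> PGL_stab n X"
    then obtain A B where A: "a = PGL_of n A" "A \<in> carrier (GL n)" "stabilizes A X"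
      and B: "b = PGL_of n B" "B \<in> carrier (GL n)" "stabilizes B X"
      unfolding PGL_stab_eq by blast
    have "stabilizes (A * B) X"
      using stabilizes_mult[OF GL_carrier_mat[OF A(2)] GL_carrier_mat[OF B(2)] X A(3) B(3)] .
    moreover have "A * B \<in> carrier (GL n)" by (rule GL_mult_closed[OF A(2) B(2)])
    ultimately show "a \<otimes>\<^bsub>PGL n\<^esub> b \<in> PGL_stab n X"
      unfolding A(1) B(1) PGL_of_mult[OF A(2) B(2)] PGL_stab_eq by blast
  qed
qed

lemma PGL_stab_conjugate_into:
  assumes conj: "\<And>A. A \<in> carrier (GL n) \<Longrightarrow> stabilizes A X \<Longrightarrow>
      \<exists>B\<in>carrier (GL n). stabilizes (B * A * inv\<^bsub>GL n\<^esub> B) Y"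
    and a: "a \<in> PGL_stab n X"
  shows "\<exists>a'\<in>PGL_stab n Y. conjugate_in (PGL n :: 'a::field mat set monoid) a a'"
proof -
  obtain A where A: "a = PGL_of n A" "A \<in> carrier (GL n)" "stabilizes A X"
    using a unfolding PGL_stab_eq by blast
  obtain B where B: "B \<in> carrier (GL n)" "stabilizes (B * A * inv\<^bsub>GL n\<^esub> B) Y"
    using conj[OF A(2,3)] by blast
  have BA: "B * A \<in> carrier (GL n)" by (rule GL_mult_closed[OF B(1) A(2)])
  have BAB: "B * A * inv\<^bsub>GL n\<^esub> B \<in> carrier (GL n)" by (rule GL_mult_closed[OF BA GL.inv_closed[OF B(1)]])
  have "PGL_of n B \<otimes>\<^bsub>PGL n\<^esub> a \<otimes>\<^bsub>PGL n\<^esub> inv\<^bsub>PGL n\<^esub> PGL_of n B = PGL_of n (B * A * inv\<^bsub>GL n\<^esub> B)"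
    unfolding A(1) PGL_of_mult[OF B(1) A(2)] PGL_of_inv[OF B(1)]
    using PGL_of_mult[OF BA GL.inv_closed[OF B(1)]] .
  then have "conjugate_in (PGL n) a (PGL_of n (B * A * inv\<^bsub>GL n\<^esub> B))"
    unfolding conjugate_in_def using PGL_of_carrier[OF B(1)] by blast
  moreover have "PGL_of n (B * A * inv\<^bsub>GL n\<^esub> B) \<in> PGL_stab n Y"
    unfolding PGL_stab_eq using BAB B(2) by blast
  ultimately show ?thesis by blast
qed

section \<open>Points and hyperplanes of \<open>PG(n - 1, F)\<close>\<close>

lemma nonzero_vec_coord:
  assumes "x \<in> carrier_vec n" "x \<noteq> 0\<^sub>v n"
  shows "\<exists>k<n. x $ k \<noteq> (0 :: 'a::zero)"
  using assms by (auto intro!: eq_vecI)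

definition move_mat :: "nat \<Rightarrow> 'a::field vec \<Rightarrow> 'a vec \<Rightarrow> nat \<Rightarrow> 'a mat" where
  "move_mat n x y k =
     mat n n (\<lambda>(i, j). (if i = j then 1 else 0) + (if j = k then (y $ i - x $ i) / x $ k else 0))"

lemma move_mat_carrier: "move_mat n x y k \<in> carrier_mat n n"
  by (simp add: move_mat_def)

lemma move_mat_mult_vec:
  assumes x: "x \<in> carrier_vec n" and y: "y \<in> carrier_vec n" and k: "k < n" "x $ k \<noteq> 0"
  shows "move_mat n x y k *\<^sub>v x = y"
proof (rule eq_vecI)
  fix i assume "i < dim_vec y"
  then have i: "i < n" using y by simp
  have "(move_mat n x y k *\<^sub>v x) $ i
      = (\<Sum>l\<in>{0..<n}. ((if i = l then 1 else 0) + (if l = k then (y $ i - x $ i) / x $ k else 0)) * x $ l)"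
    using i x by (simp add: move_mat_def scalar_prod_def)
  also have "\<dots> = (\<Sum>l\<in>{0..<n}. if i = l then x $ l else 0)
      + (\<Sum>l\<in>{0..<n}. if l = k then (y $ i - x $ i) / x $ k * x $ l else 0)"
    by (subst sum.distrib[symmetric]) (rule sum.cong, auto simp: distrib_right)
  also have "\<dots> = y $ i"
    using i k by (simp add: sum.delta sum.delta')
  finally show "(move_mat n x y k *\<^sub>v x) $ i = y $ i" .
qed (use y in \<open>simp add: move_mat_def\<close>)

lemma move_mat_inverse:
  assumes k: "k < n" "x $ k \<noteq> 0" "y $ k \<noteq> 0"
  shows "move_mat n y x k * move_mat n x y k = 1\<^sub>m n"
proof (rule eq_matI)
  fix i j assume "i < dim_row (1\<^sub>m n :: 'a mat)" "j < dim_col (1\<^sub>m n :: 'a mat)"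
  then have i: "i < n" and j: "j < n" by auto
  let ?r = "(x $ i - y $ i) / y $ k" and ?s = "\<lambda>l. (y $ l - x $ l) / x $ k"
  have "(move_mat n y x k * move_mat n x y k) $$ (i, j)
      = (\<Sum>l\<in>{0..<n}. ((if i = l then 1 else 0) + (if l = k then ?r else 0))
          * ((if l = j then 1 else 0) + (if j = k then ?s l else 0)))"
    using i j by (simp add: move_mat_def scalar_prod_def)
  also have "\<dots> = (\<Sum>l\<in>{0..<n}. if i = l then (if l = j then 1 else 0) + (if j = k then ?s l else 0) else 0)
      + (\<Sum>l\<in>{0..<n}. if l = k then ?r * ((if l = j then 1 else 0) + (if j = k then ?s l else 0)) else 0)"
    by (subst sum.distrib[symmetric]) (rule sum.cong, auto simp: distrib_right)
  also have "\<dots> = ((if i = j then 1 else 0) + (if j = k then ?s i else 0))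
      + ?r * ((if k = j then 1 else 0) + (if j = k then ?s k else 0))"
    using i k by (simp add: sum.delta sum.delta')
  also have "\<dots> = (if i = j then 1 else 0)"
    using k by (cases "j = k") (auto simp: field_simps)
  finally show "(move_mat n y x k * move_mat n x y k) $$ (i, j) = 1\<^sub>m n $$ (i, j)"
    using i j by simp
qed (simp_all add: move_mat_def)

lemma move_mat_GL:
  assumes "x \<in> carrier_vec n" "y \<in> carrier_vec n" "k < n" "x $ k \<noteq> 0" "y $ k \<noteq> 0"
  shows "move_mat n x y k \<in> carrier (GL n)"
  using GL_of_left_inverse[OF move_mat_carrier move_mat_carrier move_mat_inverse[OF assms(3-5)]] .

lemma GL_transitive_nonzero_vec:
  assumes x: "x \<in> carrier_vec n" "x \<noteq> 0\<^sub>v n" and y: "y \<in> carrier_vec n" "y \<noteq> 0\<^sub>v n"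
  shows "\<exists>M\<in>carrier (GL n :: 'a::field mat monoid). M *\<^sub>v x = y"
proof -
  obtain k where k: "k < n" "x $ k \<noteq> 0" using nonzero_vec_coord[OF x] by blast
  obtain j where j: "j < n" "y $ j \<noteq> 0" using nonzero_vec_coord[OF y] by blast
  \<comment> \<open>route through the all-ones vector, none of whose coordinates vanishes\<close>
  define e where "e = vec n (\<lambda>_. 1 :: 'a)"
  have e: "e \<in> carrier_vec n" "e $ k \<noteq> 0" "e $ j \<noteq> 0" using k j by (auto simp: e_def)
  let ?M = "move_mat n e y j * move_mat n x e k"
  have "?M *\<^sub>v x = y"
    using assoc_mult_mat_vec[OF move_mat_carrier move_mat_carrier x(1)]
      move_mat_mult_vec[OF x(1) e(1) k] move_mat_mult_vec[OF e(1) y(1) j(1) e(3)] by simp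
  moreover have "?M \<in> carrier (GL n)"
    by (rule GL_mult_closed[OF move_mat_GL[OF e(1) y(1) j(1) e(3) j(2)] move_mat_GL[OF x(1) e(1) k e(2)]])
  ultimately show ?thesis by blast
qed

lemma proj_point_subset: "v \<in> carrier_vec n \<Longrightarrow> proj_point n v \<subseteq> carrier_vec n"
  unfolding proj_point_def by auto

lemma proj_hyperplane_subset: "proj_hyperplane n w \<subseteq> carrier_vec n"
  unfolding proj_hyperplane_def by auto

lemma image_proj_point:
  assumes B: "B \<in> carrier_mat n n" and v: "v \<in> carrier_vec n"
    and Bv: "B *\<^sub>v v = c \<cdot>\<^sub>v v'" and c: "c \<noteq> (0 :: 'a::field)"
  shows "(\<lambda>u. B *\<^sub>v u) ` proj_point n v = proj_point n v'"
proof -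
  have B_smult: "B *\<^sub>v (d \<cdot>\<^sub>v v) = (d * c) \<cdot>\<^sub>v v'" for d
    unfolding mult_mat_vec[OF B v] Bv by (simp add: smult_smult_assoc)
  have "d \<cdot>\<^sub>v v' = B *\<^sub>v ((d / c) \<cdot>\<^sub>v v)" for d
    unfolding B_smult using c by simp
  then show ?thesis
    unfolding proj_point_def using B_smult by blast
qed

lemma image_proj_hyperplane:
  assumes B: "B \<in> carrier (GL n :: 'a::field mat monoid)" and u: "u \<in> carrier_vec n"
    and w: "w \<in> carrier_vec n" and Bw: "transpose_mat B *\<^sub>v w = c \<cdot>\<^sub>v u" and c: "c \<noteq> 0"
  shows "(\<lambda>y. B *\<^sub>v y) ` proj_hyperplane n u = proj_hyperplane n w"
proof
  have Bc: "B \<in> carrier_mat n n" using GL_carrier_mat[OF B] .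
  have key: "w \<bullet> (B *\<^sub>v y) = c * (u \<bullet> y)" if y: "y \<in> carrier_vec n" for y
    using transpose_vec_mult_scalar[OF Bc y w] Bw u y by simp
  show "(\<lambda>y. B *\<^sub>v y) ` proj_hyperplane n u \<subseteq> proj_hyperplane n w"
    using key Bc by (auto simp: proj_hyperplane_def)
  show "proj_hyperplane n w \<subseteq> (\<lambda>y. B *\<^sub>v y) ` proj_hyperplane n u"
  proof
    fix z assume "z \<in> proj_hyperplane n w"
    then have z: "z \<in> carrier_vec n" "w \<bullet> z = 0" unfolding proj_hyperplane_def by auto
    define t where "t = inv\<^bsub>GL n\<^esub> B *\<^sub>v z"
    have t: "t \<in> carrier_vec n" "B *\<^sub>v t = z"
      using GL_inv(1)[OF B] z(1) GL_inv_cancel[OF B z(1)] by (auto simp: t_def)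
    then have "u \<bullet> t = 0" using key[OF t(1)] z(2) c by simp
    then show "z \<in> (\<lambda>y. B *\<^sub>v y) ` proj_hyperplane n u"
      using t unfolding proj_hyperplane_def by blast
  qed
qed

lemma minus_eq_zero_vec_iff:
  assumes "a \<in> carrier_vec n" "b \<in> carrier_vec n"
  shows "a - b = 0\<^sub>v n \<longleftrightarrow> a = (b :: 'a::ab_group_add vec)"
proof
  assume ab: "a - b = 0\<^sub>v n"
  show "a = b"
  proof (rule eq_vecI)
    fix i assume i: "i < dim_vec b"
    then have "(a - b) $ i = 0" using ab assms by simp
    then show "a $ i = b $ i" using i assms by simp
  qed (use assms in simp)
qed (use assms in simp)

lemma scalar_mat_mult_vec: "v \<in> carrier_vec n \<Longrightarrow> (c \<cdot>\<^sub>m 1\<^sub>m n) *\<^sub>v v = (c :: 'a::field) \<cdot>\<^sub>v v"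
  by (rule eq_vecI) auto

lemma eigenvalue_iff_det:
  assumes A: "A \<in> carrier_mat n n"
  shows "(\<exists>v\<in>carrier_vec n. v \<noteq> 0\<^sub>v n \<and> A *\<^sub>v v = c \<cdot>\<^sub>v v) \<longleftrightarrow> det (A - c \<cdot>\<^sub>m 1\<^sub>m n) = (0 :: 'a::field)"
proof -
  have "(A - c \<cdot>\<^sub>m 1\<^sub>m n) *\<^sub>v v = 0\<^sub>v n \<longleftrightarrow> A *\<^sub>v v = c \<cdot>\<^sub>v v" if v: "v \<in> carrier_vec n" for v
  proof -
    have "(A - c \<cdot>\<^sub>m 1\<^sub>m n) *\<^sub>v v = A *\<^sub>v v - c \<cdot>\<^sub>v v"
      using A v by (simp add: minus_mult_distrib_mat_vec scalar_mat_mult_vec)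
    then show ?thesis using A v by (simp add: minus_eq_zero_vec_iff)
  qed
  then show ?thesis
    unfolding det_0_iff_vec_prod_zero_field[OF minus_carrier_mat[OF smult_carrier_mat[OF one_carrier_mat]]]
    by blast
qed

lemma eigenvalue_transpose:
  assumes A: "A \<in> carrier_mat n n" and v: "v \<in> carrier_vec n" "v \<noteq> 0\<^sub>v n" and Av: "A *\<^sub>v v = c \<cdot>\<^sub>v v"
  shows "\<exists>u\<in>carrier_vec n. u \<noteq> 0\<^sub>v n \<and> transpose_mat A *\<^sub>v u = (c :: 'a::field) \<cdot>\<^sub>v u"
proof -
  have M: "A - c \<cdot>\<^sub>m 1\<^sub>m n \<in> carrier_mat n n" by (rule minus_carrier_mat) simp
  have "transpose_mat (A - c \<cdot>\<^sub>m 1\<^sub>m n) = transpose_mat A - c \<cdot>\<^sub>m 1\<^sub>m n"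
    using A by (intro eq_matI) auto
  then have "det (transpose_mat A - c \<cdot>\<^sub>m 1\<^sub>m n) = det (A - c \<cdot>\<^sub>m 1\<^sub>m n)"
    using det_transpose[OF M] by simp
  also have "\<dots> = 0" using eigenvalue_iff_det[OF A] v Av by blast
  finally show ?thesis
    unfolding eigenvalue_iff_det[OF transpose_carrier_mat[THEN iffD2, OF A]] .
qed

lemma GL_eigenvalue_nonzero:
  assumes A: "A \<in> carrier (GL n :: 'a::field mat monoid)" and v: "v \<in> carrier_vec n" "v \<noteq> 0\<^sub>v n"
    and Av: "A *\<^sub>v v = c \<cdot>\<^sub>v v"
  shows "c \<noteq> 0"
proof
  assume "c = 0"
  then have "A *\<^sub>v v = 0\<^sub>v n" using Av v(1) by auto
  then have "det A = 0"
    using det_0_iff_vec_prod_zero_field[OF GL_carrier_mat[OF A]] v by blast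
  then show False using A by (simp add: GL_carrier)
qed

lemma stabilizes_proj_point_eigenvector:
  assumes "A \<in> carrier_mat n n" "v \<in> carrier_vec n" "stabilizes A (proj_point n v)"
  shows "\<exists>c. A *\<^sub>v v = (c :: 'a::field) \<cdot>\<^sub>v v"
proof -
  have "v \<in> proj_point n v" unfolding proj_point_def by (auto intro: exI[of _ 1])
  then have "A *\<^sub>v v \<in> proj_point n v" using assms(3) unfolding stabilizes_def by blast
  then show ?thesis unfolding proj_point_def by blast
qed

lemma orthogonal_proj_hyperplane_imp_multiple:
  assumes w: "w \<in> carrier_vec n" "w \<noteq> 0\<^sub>v n" and z: "z \<in> carrier_vec n"
    and orth: "\<And>y. y \<in> proj_hyperplane n w \<Longrightarrow> z \<bullet> y = 0"
  shows "\<exists>c. z = c \<cdot>\<^sub>v (w :: 'a::field vec)"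
proof -
  obtain k where k: "k < n" "w $ k \<noteq> 0" using nonzero_vec_coord[OF w] by blast
  have "z = (z $ k / w $ k) \<cdot>\<^sub>v w"
  proof (rule eq_vecI)
    fix j assume "j < dim_vec ((z $ k / w $ k) \<cdot>\<^sub>v w)"
    then have j: "j < n" using w by simp
    \<comment> \<open>test against the vector of the hyperplane supported on the coordinates j and k\<close>
    define y where "y = w $ k \<cdot>\<^sub>v unit_vec n j - w $ j \<cdot>\<^sub>v unit_vec n k"
    have dot: "a \<bullet> y = w $ k * a $ j - w $ j * a $ k" if "a \<in> carrier_vec n" for a
      using that j k unfolding y_def by (simp add: scalar_prod_minus_distrib[of _ n])
    have "y \<in> proj_hyperplane n w"
      using dot[OF w(1)] unfolding proj_hyperplane_def y_def by simp
    then have "w $ k * z $ j = w $ j * z $ k" using orth dot[OF z] by simp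
    then show "z $ j = ((z $ k / w $ k) \<cdot>\<^sub>v w) $ j" using j k(2) w by (simp add: field_simps)
  qed (use w z in simp)
  then show ?thesis by blast
qed

lemma stabilizes_proj_hyperplane_eigenvector:
  assumes A: "A \<in> carrier_mat n n" and w: "w \<in> carrier_vec n" "w \<noteq> 0\<^sub>v n"
    and stab: "stabilizes A (proj_hyperplane n w)"
  shows "\<exists>c. transpose_mat A *\<^sub>v w = (c :: 'a::field) \<cdot>\<^sub>v w"
proof (rule orthogonal_proj_hyperplane_imp_multiple[OF w])
  show "transpose_mat A *\<^sub>v w \<in> carrier_vec n" using A w by simp
  fix y assume y: "y \<in> proj_hyperplane n w"
  then have "A *\<^sub>v y \<in> proj_hyperplane n w" using stab unfolding stabilizes_def by blast
  then show "(transpose_mat A *\<^sub>v w) \<bullet> y = 0"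
    using y transpose_vec_mult_scalar[OF A _ w(1)] unfolding proj_hyperplane_def by simp
qed

lemma point_stabilizer_stabilizes_hyperplane:
  assumes A: "A \<in> carrier (GL n :: 'a::field mat monoid)" and v: "v \<in> carrier_vec n" "v \<noteq> 0\<^sub>v n"
    and stab: "stabilizes A (proj_point n v)"
  shows "\<exists>u\<in>carrier_vec n. u \<noteq> 0\<^sub>v n \<and> stabilizes A (proj_hyperplane n u)"
proof -
  obtain c where Av: "A *\<^sub>v v = c \<cdot>\<^sub>v v"
    using stabilizes_proj_point_eigenvector[OF GL_carrier_mat[OF A] v(1) stab] by blast
  obtain u where u: "u \<in> carrier_vec n" "u \<noteq> 0\<^sub>v n" "transpose_mat A *\<^sub>v u = c \<cdot>\<^sub>v u"
    using eigenvalue_transpose[OF GL_carrier_mat[OF A] v Av] by blast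
  have "stabilizes A (proj_hyperplane n u)"
    unfolding stabilizes_def
    using image_proj_hyperplane[OF A u(1) u(1) u(3) GL_eigenvalue_nonzero[OF A v Av]] .
  then show ?thesis using u by blast
qed

lemma hyperplane_stabilizer_stabilizes_point:
  assumes A: "A \<in> carrier (GL n :: 'a::field mat monoid)" and w: "w \<in> carrier_vec n" "w \<noteq> 0\<^sub>v n"
    and stab: "stabilizes A (proj_hyperplane n w)"
  shows "\<exists>v\<in>carrier_vec n. v \<noteq> 0\<^sub>v n \<and> stabilizes A (proj_point n v)"
proof -
  have Ac: "A \<in> carrier_mat n n" by (rule GL_carrier_mat[OF A])
  obtain c where ATw: "transpose_mat A *\<^sub>v w = c \<cdot>\<^sub>v w"
    using stabilizes_proj_hyperplane_eigenvector[OF Ac w stab] by blast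
  obtain v where v: "v \<in> carrier_vec n" "v \<noteq> 0\<^sub>v n" "A *\<^sub>v v = c \<cdot>\<^sub>v v"
    using eigenvalue_transpose[OF transpose_carrier_mat[THEN iffD2, OF Ac] w ATw] by auto
  have "stabilizes A (proj_point n v)"
    unfolding stabilizes_def using image_proj_point[OF Ac v(1) v(3) GL_eigenvalue_nonzero[OF A v]] .
  then show ?thesis using v by blast
qed

lemma GL_transitive_proj_points:
  assumes "v \<in> carrier_vec n" "v \<noteq> 0\<^sub>v n" "v' \<in> carrier_vec n" "v' \<noteq> 0\<^sub>v n"
  shows "\<exists>B\<in>carrier (GL n :: 'a::field mat monoid). (\<lambda>u. B *\<^sub>v u) ` proj_point n v = proj_point n v'"
proof -
  obtain B where B: "B \<in> carrier (GL n :: 'a mat monoid)" "B *\<^sub>v v = v'"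
    using GL_transitive_nonzero_vec[OF assms] by blast
  then have "(\<lambda>u. B *\<^sub>v u) ` proj_point n v = proj_point n v'"
    using image_proj_point[OF GL_carrier_mat[OF B(1)] assms(1), of 1 v'] by simp
  then show ?thesis using B(1) by blast
qed

lemma GL_transitive_proj_hyperplanes:
  assumes u: "u \<in> carrier_vec n" "u \<noteq> 0\<^sub>v n" and w: "w \<in> carrier_vec n" "w \<noteq> 0\<^sub>v n"
  shows "\<exists>B\<in>carrier (GL n :: 'a::field mat monoid). (\<lambda>y. B *\<^sub>v y) ` proj_hyperplane n u = proj_hyperplane n w"
proof -
  obtain M where M: "M \<in> carrier (GL n :: 'a mat monoid)" "M *\<^sub>v w = u"
    using GL_transitive_nonzero_vec[OF w u] by blast
  have "(\<lambda>y. transpose_mat M *\<^sub>v y) ` proj_hyperplane n u = proj_hyperplane n w"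
    using image_proj_hyperplane[OF transpose_mat_GL[OF M(1)] u(1) w(1), of 1] M(2) u(1) by simp
  then show ?thesis using transpose_mat_GL[OF M(1)] by blast
qed

lemma EC_triple_PGL_point_hyperplane:
  assumes v: "v \<in> carrier_vec n" "v \<noteq> 0\<^sub>v n" and w: "w \<in> carrier_vec n" "w \<noteq> 0\<^sub>v n"
  shows "EC_triple (PGL n :: 'a::field mat set monoid)
           (PGL_stab n (proj_point n v)) (PGL_stab n (proj_hyperplane n w))"
proof -
  have point_to_hyperplane: "\<exists>B\<in>carrier (GL n). stabilizes (B * A * inv\<^bsub>GL n\<^esub> B) (proj_hyperplane n w)"
    if A: "A \<in> carrier (GL n :: 'a mat monoid)" "stabilizes A (proj_point n v)" for A
  proof -
    obtain u where u: "u \<in> carrier_vec n" "u \<noteq> 0\<^sub>v n" "stabilizes A (proj_hyperplane n u)"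
      using point_stabilizer_stabilizes_hyperplane[OF A(1) v A(2)] by blast
    obtain B where "B \<in> carrier (GL n)" "(\<lambda>y. B *\<^sub>v y) ` proj_hyperplane n u = proj_hyperplane n w"
      using GL_transitive_proj_hyperplanes[OF u(1,2) w] by blast
    then show ?thesis
      using stabilizes_conjugate[OF GL_carrier_mat[OF A(1)] _ proj_hyperplane_subset u(3)] by blast
  qed
  have hyperplane_to_point: "\<exists>B\<in>carrier (GL n). stabilizes (B * A * inv\<^bsub>GL n\<^esub> B) (proj_point n v)"
    if A: "A \<in> carrier (GL n :: 'a mat monoid)" "stabilizes A (proj_hyperplane n w)" for A
  proof -
    obtain v' where v': "v' \<in> carrier_vec n" "v' \<noteq> 0\<^sub>v n" "stabilizes A (proj_point n v')"
      using hyperplane_stabilizer_stabilizes_point[OF A(1) w A(2)] by blast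
    obtain B where "B \<in> carrier (GL n)" "(\<lambda>y. B *\<^sub>v y) ` proj_point n v' = proj_point n v"
      using GL_transitive_proj_points[OF v'(1,2) v] by blast
    then show ?thesis
      using stabilizes_conjugate[OF GL_carrier_mat[OF A(1)] _ proj_point_subset[OF v'(1)] v'(3)] by blast
  qed
  show ?thesis
    unfolding EC_triple_def
    using PGL_stab_subgroup[OF proj_point_subset[OF v(1)]] PGL_stab_subgroup[OF proj_hyperplane_subset]
      PGL_stab_conjugate_into[OF point_to_hyperplane] PGL_stab_conjugate_into[OF hyperplane_to_point]
    by blast
qed

theorem mainTheorem2:
  fixes n :: nat and x Hyp :: "'a::field vec set"
  assumes "n \<ge> 2"
    and "is_proj_point n x"
    and "is_proj_hyperplane n Hyp"
  shows "EC_triple (wreath (PGL n :: 'a mat set monoid) {1, 2} Sym2)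
           (wreath_sub (PGL_stab n x) {1, 2} Sym2)
           (wreath_sub (PGL_stab n Hyp) {1, 2} Sym2)"
proof -
  obtain v where "v \<in> carrier_vec n" "v \<noteq> 0\<^sub>v n" "x = proj_point n v"
    using assms(2) unfolding is_proj_point_def by blast
  moreover obtain w where "w \<in> carrier_vec n" "w \<noteq> 0\<^sub>v n" "Hyp = proj_hyperplane n w"
    using assms(3) unfolding is_proj_hyperplane_def by blast
  ultimately show ?thesis
    using EC_triple_wreath_Sym2[OF group_PGL EC_triple_PGL_point_hyperplane] by simp
qed

end
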